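(* Let $(X_t)_{t\ge1}$ be i.i.d. random variables in $[0,1]$ with variance $\sigma^2>0$, and fix $\alpha\in(0,1)$. Define $\widehat\mu_0=1/2$ and $\widehat\sigma_0^2=1/4$, and for $t\ge1$ \[ \widehat\mu_t=\frac{1/2+\sum_{i\le t}X_i}{t+1},\qquad \widehat\sigma_t^2=\frac{1/4+\sum_{i\le t}(X_i-\widehat\mu_i)^2}{t+1},\qquad \lambda_t=\sqrt{\frac{2\log(2/\alpha)}{\widehat\sigma_{t-1}^2\,t\log(1+t)}}\wedge\frac12 . \] Let \[ W_t^{\mathrm{WSR}}=\frac{\log(2/\alpha)+\sum_{i\le t}(X_i-\widehat\mu_{i-1})^2\psi_E(\lambda_i)}{\sum_{i\le t}\lambda_i}. \] Then, almost surely, \[ W_t^{\mathrm{WSR}}\sim\frac{\sigma}{2}\sqrt{\frac{\log(2/\alpha)\log t}{2t}}\,\big(1+\log\log t\big). \]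
   Context: $\psi_E(x)=-\log(1-x)-x$ for $x\in[0,1)$. For (possibly random) sequences, $f(t)\sim g(t)$ means $f(t)/g(t)\to1$ as $t\to\infty$ (almost surely). *)

theory Defs
  imports "HOL-Probability.Probability" "HOL-Library.Landau_Symbols"
begin

definition psiE :: "real \<Rightarrow> real" where
  "psiE x = - ln (1 - x) - x"

definition mu_hat :: "(nat \<Rightarrow> 'a \<Rightarrow> real) \<Rightarrow> nat \<Rightarrow> 'a \<Rightarrow> real" where
  "mu_hat X t \<omega> = (1/2 + (\<Sum>i\<in>{1..t}. X i \<omega>)) / (real t + 1)"

definition sigma2_hat :: "(nat \<Rightarrow> 'a \<Rightarrow> real) \<Rightarrow> nat \<Rightarrow> 'a \<Rightarrow> real" where
  "sigma2_hat X t \<omega> = (1/4 + (\<Sum>i\<in>{1..t}. (X i \<omega> - mu_hat X i \<omega>)^2)) / (real t + 1)"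

definition lambda_wsr :: "real \<Rightarrow> (nat \<Rightarrow> 'a \<Rightarrow> real) \<Rightarrow> nat \<Rightarrow> 'a \<Rightarrow> real" where
  "lambda_wsr \<alpha> X t \<omega> =
     min (sqrt (2 * ln (2 / \<alpha>) / (sigma2_hat X (t - 1) \<omega> * real t * ln (1 + real t)))) (1/2)"

definition W_wsr :: "real \<Rightarrow> (nat \<Rightarrow> 'a \<Rightarrow> real) \<Rightarrow> nat \<Rightarrow> 'a \<Rightarrow> real" where
  "W_wsr \<alpha> X t \<omega> =
     (ln (2 / \<alpha>) + (\<Sum>i\<in>{1..t}. (X i \<omega> - mu_hat X (i - 1) \<omega>)^2 * psiE (lambda_wsr \<alpha> X i \<omega>)))
     / (\<Sum>i\<in>{1..t}. lambda_wsr \<alpha> X i \<omega>)"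

end

theory Submission
  imports Defs "HOL-Real_Asymp.Real_Asymp"
begin

(* Since the observations are bounded, Hoeffding's inequality and Borel-Cantelli give the strong
   law of large numbers for X_i and X_i^2, so almost surely the running mean and variance estimates
   converge to mu and sigma^2; it then suffices to study one such path.  Along it the cap 1/2 in
   lambda_t is eventually inactive and lambda_t ~ K / sqrt (t log t) with K = sqrt (2 log (2/alpha) / sigma^2),
   hence sum lambda_i ~ 2 K sqrt (t / log t).  As psi_E x ~ x^2/2, the i-th numerator term is
   ~ (log (2/alpha) / sigma^2) (X_i - mu_hat_(i-1))^2 / (i log i), and Abel summation turns the Cesaro
   convergence of the squared prediction errors to sigma^2 into the numerator asymptotics
   log (2/alpha) log log t.  The quotient is (sigma/2) sqrt (log (2/alpha) log t / (2t)) log log t,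
   and log log t ~ 1 + log log t. *)

section \<open>Limits of weighted sums and Cesaro means\<close>

lemma sum_by_parts:
  fixes y w :: "nat \<Rightarrow> 'a::comm_ring"
  shows "(\<Sum>i\<in>{1..t}. y i * w i) =
         (\<Sum>i\<in>{1..t}. y i) * w (Suc t) + (\<Sum>j\<in>{1..t}. (\<Sum>i\<in>{1..j}. y i) * (w j - w (Suc j)))"
  by (induction t) (simp_all add: algebra_simps)

lemma abs_sum_le_head_tail:
  fixes a b c :: "nat \<Rightarrow> real"
  assumes "N \<le> t" "0 \<le> e"
    and tail: "\<And>i. N < i \<Longrightarrow> i \<le> t \<Longrightarrow> 0 \<le> b i \<and> a i = c i * b i \<and> \<bar>c i\<bar> \<le> e"
  shows "\<bar>\<Sum>i\<in>{1..t}. a i\<bar> \<le> (\<Sum>i\<in>{1..N}. \<bar>a i\<bar>) + e * ((\<Sum>i\<in>{1..t}. b i) + (\<Sum>i\<in>{1..N}. \<bar>b i\<bar>))"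
proof -
  from \<open>N \<le> t\<close> have split: "{1..t} = {1..N} \<union> {N<..t}" by auto
  have "\<bar>a i\<bar> \<le> e * b i" if "i \<in> {N<..t}" for i
    using tail[of i] that by (auto simp: abs_mult intro: mult_right_mono)
  then have "(\<Sum>i\<in>{N<..t}. \<bar>a i\<bar>) \<le> e * (\<Sum>i\<in>{N<..t}. b i)"
    unfolding sum_distrib_left by (rule sum_mono)
  also have "(\<Sum>i\<in>{N<..t}. b i) = (\<Sum>i\<in>{1..t}. b i) - (\<Sum>i\<in>{1..N}. b i)"
    unfolding split by (subst sum.union_disjoint) auto
  also have "\<dots> \<le> (\<Sum>i\<in>{1..t}. b i) + (\<Sum>i\<in>{1..N}. \<bar>b i\<bar>)"
    using sum_abs[of b "{1..N}"] by linarith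
  finally have "(\<Sum>i\<in>{N<..t}. \<bar>a i\<bar>) \<le> e * ((\<Sum>i\<in>{1..t}. b i) + (\<Sum>i\<in>{1..N}. \<bar>b i\<bar>))"
    using \<open>0 \<le> e\<close> by (simp add: mult_left_mono)
  moreover have "\<bar>\<Sum>i\<in>{1..t}. a i\<bar> \<le> (\<Sum>i\<in>{1..N}. \<bar>a i\<bar>) + (\<Sum>i\<in>{N<..t}. \<bar>a i\<bar>)"
    using sum_abs[of a "{1..t}"] unfolding split by (subst (asm) sum.union_disjoint) auto
  ultimately show ?thesis by linarith
qed

lemma weighted_sum_tendsto_zero:
  fixes a b c D :: "nat \<Rightarrow> real"
  assumes c: "c \<longlonglongrightarrow> 0"
    and ab: "eventually (\<lambda>i. 0 \<le> b i \<and> a i = c i * b i) sequentially"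
    and bD: "eventually (\<lambda>t. (\<Sum>i\<in>{1..t}. b i) \<le> D t) sequentially"
    and D: "filterlim D at_top sequentially"
  shows "(\<lambda>t. (\<Sum>i\<in>{1..t}. a i) / D t) \<longlonglongrightarrow> 0"
proof (rule LIMSEQ_I)
  fix r :: real assume r: "r > 0"
  have "eventually (\<lambda>i. \<bar>c i\<bar> < r / 2) sequentially"
    using tendstoD[OF c, of "r / 2"] r by (simp add: dist_real_def)
  with ab have "eventually (\<lambda>i. 0 \<le> b i \<and> a i = c i * b i \<and> \<bar>c i\<bar> \<le> r / 2) sequentially"
    by eventually_elim auto
  then obtain N where N: "\<And>i. i \<ge> N \<Longrightarrow> 0 \<le> b i \<and> a i = c i * b i \<and> \<bar>c i\<bar> \<le> r / 2"
    by (auto simp: eventually_sequentially)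
  define K where "K = (\<Sum>i\<in>{1..N}. \<bar>a i\<bar>) + r / 2 * (\<Sum>i\<in>{1..N}. \<bar>b i\<bar>)"
  have "0 \<le> K" using r by (simp add: K_def)
  have "eventually (\<lambda>t. 2 * K / r + 1 \<le> D t \<and> (\<Sum>i\<in>{1..t}. b i) \<le> D t \<and> N \<le> t) sequentially"
    using D bD unfolding filterlim_at_top by (intro eventually_conj) auto
  then obtain t0 where t0: "\<And>t. t \<ge> t0 \<Longrightarrow> 2 * K / r + 1 \<le> D t \<and> (\<Sum>i\<in>{1..t}. b i) \<le> D t \<and> N \<le> t"
    by (auto simp: eventually_sequentially)
  show "\<exists>t0. \<forall>t\<ge>t0. norm ((\<Sum>i\<in>{1..t}. a i) / D t - 0) < r"
  proof (intro exI allI impI)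
    fix t assume "t0 \<le> t"
    with t0 have Dt: "2 * K / r + 1 \<le> D t" "(\<Sum>i\<in>{1..t}. b i) \<le> D t" and "N \<le> t"
      by auto
    have "1 \<le> D t"
      using Dt(1) divide_nonneg_pos[OF \<open>0 \<le> K\<close> r] by linarith
    have "\<bar>\<Sum>i\<in>{1..t}. a i\<bar> \<le> (\<Sum>i\<in>{1..N}. \<bar>a i\<bar>) + r / 2 * ((\<Sum>i\<in>{1..t}. b i) + (\<Sum>i\<in>{1..N}. \<bar>b i\<bar>))"
      using N r \<open>N \<le> t\<close> by (intro abs_sum_le_head_tail) auto
    also have "\<dots> \<le> K + r / 2 * D t"
      using Dt(2) r by (simp add: K_def algebra_simps)
    also have "\<dots> < r * D t"
      using Dt(1) r by (simp add: field_simps)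
    finally show "norm ((\<Sum>i\<in>{1..t}. a i) / D t - 0) < r"
      using \<open>1 \<le> D t\<close> by (simp add: field_simps)
  qed
qed

lemma stolz_cesaro:
  fixes a b c :: "nat \<Rightarrow> real"
  assumes c: "c \<longlonglongrightarrow> l"
    and ab: "eventually (\<lambda>i. 0 \<le> b i \<and> a i = c i * b i) sequentially"
    and B: "filterlim (\<lambda>t. \<Sum>i\<in>{1..t}. b i) at_top sequentially"
  shows "(\<lambda>t. (\<Sum>i\<in>{1..t}. a i) / (\<Sum>i\<in>{1..t}. b i)) \<longlonglongrightarrow> l"
proof -
  have "(\<lambda>t. (\<Sum>i\<in>{1..t}. a i - l * b i) / (\<Sum>i\<in>{1..t}. b i)) \<longlonglongrightarrow> 0"
  proof (rule weighted_sum_tendsto_zero[OF _ _ _ B])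
    show "(\<lambda>i. c i - l) \<longlonglongrightarrow> 0"
      using tendsto_diff[OF c tendsto_const[of l]] by simp
    show "eventually (\<lambda>i. 0 \<le> b i \<and> a i - l * b i = (c i - l) * b i) sequentially"
      using ab by eventually_elim (simp add: algebra_simps)
  qed simp
  then have "(\<lambda>t. l + (\<Sum>i\<in>{1..t}. a i - l * b i) / (\<Sum>i\<in>{1..t}. b i)) \<longlonglongrightarrow> l + 0"
    by (intro tendsto_add tendsto_const)
  moreover have "eventually (\<lambda>t. (\<Sum>i\<in>{1..t}. b i) > 0) sequentially"
    using B by (rule filterlim_at_top_dense[THEN iffD1, rule_format])
  then have "eventually (\<lambda>t. l + (\<Sum>i\<in>{1..t}. a i - l * b i) / (\<Sum>i\<in>{1..t}. b i) =
      (\<Sum>i\<in>{1..t}. a i) / (\<Sum>i\<in>{1..t}. b i)) sequentially"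
    by eventually_elim (simp add: sum_subtractf sum_distrib_left field_simps)
  ultimately show ?thesis by (simp add: Lim_transform_eventually)
qed

lemma sum_asymp_equiv:
  fixes a b :: "nat \<Rightarrow> real"
  assumes ab: "a \<sim>[sequentially] b" and b: "eventually (\<lambda>i. 0 \<le> b i) sequentially"
    and B: "filterlim (\<lambda>t. \<Sum>i\<in>{1..t}. b i) at_top sequentially"
  shows "(\<lambda>t. \<Sum>i\<in>{1..t}. a i) \<sim>[sequentially] (\<lambda>t. \<Sum>i\<in>{1..t}. b i)"
proof (rule asymp_equivI', rule stolz_cesaro[OF asymp_equivD[OF ab] _ B])
  show "eventually (\<lambda>i. 0 \<le> b i \<and> a i = (if a i = 0 \<and> b i = 0 then 1 else a i / b i) * b i) sequentially"
    using b asymp_equiv_eventually_zeros[OF ab] by eventually_elim auto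
qed

lemma cesaro_mean_tendsto:
  fixes a :: "nat \<Rightarrow> real"
  assumes "a \<longlonglongrightarrow> l"
  shows "(\<lambda>t. (\<Sum>i\<in>{1..t}. a i) / real t) \<longlonglongrightarrow> l"
  using stolz_cesaro[of a l "\<lambda>_. 1" a] assms filterlim_real_sequentially by simp

lemma cesaro_mean_tendsto_perturb:
  fixes a b :: "nat \<Rightarrow> real"
  assumes "(\<lambda>t. (\<Sum>i\<in>{1..t}. a i) / real t) \<longlonglongrightarrow> l" and "(\<lambda>i. b i - a i) \<longlonglongrightarrow> 0"
  shows "(\<lambda>t. (\<Sum>i\<in>{1..t}. b i) / real t) \<longlonglongrightarrow> l"
proof -
  have "(\<lambda>t. (\<Sum>i\<in>{1..t}. a i) / real t + (\<Sum>i\<in>{1..t}. b i - a i) / real t) \<longlonglongrightarrow> l + 0"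
    by (rule tendsto_add[OF assms(1) cesaro_mean_tendsto[OF assms(2)]])
  then show ?thesis by (simp add: sum_subtractf add_divide_distrib[symmetric])
qed

lemma weighted_cesaro_mean_tendsto_zero:
  fixes y w :: "nat \<Rightarrow> real"
  assumes y: "(\<lambda>t. (\<Sum>i\<in>{1..t}. y i) / real t) \<longlonglongrightarrow> 0"
    and w_nonneg: "\<And>i. i \<ge> 1 \<Longrightarrow> 0 \<le> w i"
    and w_decr: "\<And>i. i \<ge> 1 \<Longrightarrow> w (Suc i) \<le> w i"
    and W: "filterlim (\<lambda>t. \<Sum>i\<in>{1..t}. w i) at_top sequentially"
  shows "(\<lambda>t. (\<Sum>i\<in>{1..t}. y i * w i) / (\<Sum>i\<in>{1..t}. w i)) \<longlonglongrightarrow> 0"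
proof -
  define U where "U j = (\<Sum>i\<in>{1..j}. y i)" for j
  define d where "d j = real j * (w j - w (Suc j))" for j
  have W_parts: "(\<Sum>i\<in>{1..t}. w i) = real t * w (Suc t) + (\<Sum>j\<in>{1..t}. d j)" for t
    using sum_by_parts[of "\<lambda>_. 1" w t] by (simp add: d_def)
  have d: "0 \<le> d j" if "j \<ge> 1" for j
    unfolding d_def using w_decr[OF that] by (intro mult_nonneg_nonneg) auto
  have head_le: "real t * w (Suc t) \<le> (\<Sum>i\<in>{1..t}. w i)" for t
    using W_parts[of t] sum_nonneg[of "{1..t}" d] d by auto
  have tail: "(\<lambda>t. (\<Sum>j\<in>{1..t}. U j * (w j - w (Suc j))) / (\<Sum>i\<in>{1..t}. w i)) \<longlonglongrightarrow> 0"
  proof (rule weighted_sum_tendsto_zero[OF y[folded U_def] _ _ W])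
    show "eventually (\<lambda>j. 0 \<le> d j \<and> U j * (w j - w (Suc j)) = U j / real j * d j) sequentially"
      using eventually_ge_at_top[of 1] by eventually_elim (use d in \<open>auto simp: d_def\<close>)
    show "eventually (\<lambda>t. (\<Sum>j\<in>{1..t}. d j) \<le> (\<Sum>i\<in>{1..t}. w i)) sequentially"
      using W_parts w_nonneg by (auto intro!: always_eventually)
  qed
  have head: "(\<lambda>t. U t * w (Suc t) / (\<Sum>i\<in>{1..t}. w i)) \<longlonglongrightarrow> 0"
  proof (rule Lim_null_comparison[OF _ tendsto_rabs_zero[OF y[folded U_def]]])
    have "eventually (\<lambda>t. 0 < (\<Sum>i\<in>{1..t}. w i) \<and> 1 \<le> t) sequentially"
      using W by (intro eventually_conj filterlim_at_top_dense[THEN iffD1, rule_format]) auto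
    then show "eventually (\<lambda>t. norm (U t * w (Suc t) / (\<Sum>i\<in>{1..t}. w i)) \<le> \<bar>U t / real t\<bar>) sequentially"
    proof eventually_elim
      case (elim t)
      have "norm (U t * w (Suc t) / (\<Sum>i\<in>{1..t}. w i)) = \<bar>U t / real t\<bar> * (real t * w (Suc t) / (\<Sum>i\<in>{1..t}. w i))"
        using elim w_nonneg[of "Suc t"] by (simp add: abs_mult)
      also have "\<dots> \<le> \<bar>U t / real t\<bar>"
        using elim head_le[of t] w_nonneg[of "Suc t"] by (intro mult_left_le) (auto simp: field_simps)
      finally show ?case .
    qed
  qed
  show ?thesis
    using tendsto_add[OF head tail] unfolding sum_by_parts[of y w] U_def by (simp add: add_divide_distrib)
qed

lemma weighted_cesaro_mean_tendsto:
  fixes y w :: "nat \<Rightarrow> real"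
  assumes y: "(\<lambda>t. (\<Sum>i\<in>{1..t}. y i) / real t) \<longlonglongrightarrow> l"
    and w_nonneg: "\<And>i. i \<ge> 1 \<Longrightarrow> 0 \<le> w i"
    and w_decr: "\<And>i. i \<ge> 1 \<Longrightarrow> w (Suc i) \<le> w i"
    and W: "filterlim (\<lambda>t. \<Sum>i\<in>{1..t}. w i) at_top sequentially"
  shows "(\<lambda>t. (\<Sum>i\<in>{1..t}. y i * w i) / (\<Sum>i\<in>{1..t}. w i)) \<longlonglongrightarrow> l"
proof -
  have "eventually (\<lambda>t. (\<Sum>i\<in>{1..t}. y i) / real t - l = (\<Sum>i\<in>{1..t}. y i - l) / real t) sequentially"
    using eventually_ge_at_top[of 1] by eventually_elim (simp add: sum_subtractf field_simps)
  then have "(\<lambda>t. (\<Sum>i\<in>{1..t}. y i - l) / real t) \<longlonglongrightarrow> 0"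
    using Lim_transform_eventually[OF tendsto_diff[OF y tendsto_const[of l]]] by simp
  then have "(\<lambda>t. l + (\<Sum>i\<in>{1..t}. (y i - l) * w i) / (\<Sum>i\<in>{1..t}. w i)) \<longlonglongrightarrow> l + 0"
    by (intro tendsto_add tendsto_const weighted_cesaro_mean_tendsto_zero w_nonneg w_decr W)
  moreover have "eventually (\<lambda>t. (\<Sum>i\<in>{1..t}. w i) > 0) sequentially"
    using W by (rule filterlim_at_top_dense[THEN iffD1, rule_format])
  then have "eventually (\<lambda>t. l + (\<Sum>i\<in>{1..t}. (y i - l) * w i) / (\<Sum>i\<in>{1..t}. w i) =
      (\<Sum>i\<in>{1..t}. y i * w i) / (\<Sum>i\<in>{1..t}. w i)) sequentially"
    by eventually_elim (simp add: sum_subtractf sum_distrib_left left_diff_distrib field_simps)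
  ultimately show ?thesis by (simp add: Lim_transform_eventually)
qed

lemma asymp_equiv_add_const:
  fixes f :: "'a \<Rightarrow> real"
  assumes "filterlim f at_top F"
  shows "(\<lambda>x. c + f x) \<sim>[F] f"
proof -
  have "(\<lambda>_. 1) \<in> o[F](f)"
    using assms by (simp add: smallomega_iff_smallo[symmetric] smallomega_1_conv_filterlim filterlim_at_top_imp_at_infinity)
  then have "(\<lambda>_. c) \<in> o[F](f)"
    using landau_o.small.const_in_iff[of c F f] by (cases "c = 0") auto
  then show ?thesis by (subst asymp_equiv_add_left) simp_all
qed

lemma sum_asymp_equiv_telescoping:
  fixes a B :: "nat \<Rightarrow> real"
  assumes a: "(\<lambda>i. a (Suc i)) \<sim>[sequentially] (\<lambda>i. B (Suc i) - B i)"
    and B_mono: "eventually (\<lambda>i. B i \<le> B (Suc i)) sequentially"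
    and B: "filterlim B at_top sequentially"
  shows "(\<lambda>t. \<Sum>i\<in>{1..t}. a i) \<sim>[sequentially] B"
proof -
  define b where "b i = B i - B (i - 1)" for i
  have tel: "(\<Sum>i\<in>{1..t}. b i) = - B 0 + B t" for t
    by (induction t) (simp_all add: b_def)
  have b_sum: "(\<lambda>t. \<Sum>i\<in>{1..t}. b i) \<sim>[sequentially] B"
    unfolding tel by (rule asymp_equiv_add_const[OF B])
  have "(\<lambda>i. if a (Suc i) = 0 \<and> b (Suc i) = 0 then 1 else a (Suc i) / b (Suc i)) \<longlonglongrightarrow> 1"
    using asymp_equivD[OF a] unfolding b_def diff_Suc_1 .
  then have "a \<sim>[sequentially] b"
    by (rule asymp_equivI[OF LIMSEQ_imp_Suc])
  moreover have "eventually (\<lambda>i. 0 \<le> b i) sequentially"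
    using B_mono unfolding b_def by (subst eventually_sequentially_Suc[symmetric]) simp
  moreover have "filterlim (\<lambda>t. \<Sum>i\<in>{1..t}. b i) at_top sequentially"
    using asymp_equiv_at_top_transfer[OF asymp_equiv_symI[OF b_sum] B] .
  ultimately have "(\<lambda>t. \<Sum>i\<in>{1..t}. a i) \<sim>[sequentially] (\<lambda>t. \<Sum>i\<in>{1..t}. b i)"
    by (rule sum_asymp_equiv)
  also note b_sum
  finally show ?thesis .
qed

lemma sum_inverse_mult_ln_asymp_equiv:
  "(\<lambda>t. \<Sum>i\<in>{1..t}. 1 / (real i * ln (1 + real i))) \<sim>[sequentially] (\<lambda>t. ln (ln (real t)))"
  by (rule sum_asymp_equiv_telescoping) ((simp only: of_nat_Suc)?, real_asymp)+

lemma sum_inverse_sqrt_mult_ln_asymp_equiv: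
  "(\<lambda>t. \<Sum>i\<in>{1..t}. 1 / sqrt (real i * ln (1 + real i))) \<sim>[sequentially]
     (\<lambda>t. 2 * sqrt (real t / ln (real t)))"
  by (rule sum_asymp_equiv_telescoping) ((simp only: of_nat_Suc)?, real_asymp)+

lemma regularized_mean_tendsto:
  fixes s :: "nat \<Rightarrow> real"
  assumes "(\<lambda>t. s t / real t) \<longlonglongrightarrow> l"
  shows "(\<lambda>t. (c + s t) / (real t + 1)) \<longlonglongrightarrow> l"
proof -
  have "(\<lambda>t. c / (real t + 1) + s t / real t * (real t / (real t + 1))) \<longlonglongrightarrow> 0 + l * 1"
    by (intro tendsto_intros assms) real_asymp+
  moreover have "eventually (\<lambda>t. c / (real t + 1) + s t / real t * (real t / (real t + 1)) =
      (c + s t) / (real t + 1)) sequentially"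
    using eventually_gt_at_top[of 0] by eventually_elim (simp add: add_divide_distrib)
  ultimately show ?thesis by (simp add: Lim_transform_eventually)
qed

lemma cesaro_squared_deviation_tendsto:
  fixes x a :: "nat \<Rightarrow> real"
  assumes x: "\<And>i. i \<ge> 1 \<Longrightarrow> x i \<in> {0..1}"
    and mean: "(\<lambda>t. (\<Sum>i\<in>{1..t}. x i) / real t) \<longlonglongrightarrow> \<mu>"
    and square: "(\<lambda>t. (\<Sum>i\<in>{1..t}. (x i)\<^sup>2) / real t) \<longlonglongrightarrow> m"
    and a: "a \<longlonglongrightarrow> \<mu>"
  shows "(\<lambda>t. (\<Sum>i\<in>{1..t}. (x i - a i)\<^sup>2) / real t) \<longlonglongrightarrow> m - \<mu>\<^sup>2"
proof (rule cesaro_mean_tendsto_perturb)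
  have "(\<lambda>t. (\<Sum>i\<in>{1..t}. (x i)\<^sup>2) / real t - 2 * \<mu> * ((\<Sum>i\<in>{1..t}. x i) / real t) + \<mu>\<^sup>2)
      \<longlonglongrightarrow> m - 2 * \<mu> * \<mu> + \<mu>\<^sup>2"
    by (intro tendsto_intros mean square)
  moreover have "eventually (\<lambda>t. (\<Sum>i\<in>{1..t}. (x i)\<^sup>2) / real t - 2 * \<mu> * ((\<Sum>i\<in>{1..t}. x i) / real t) + \<mu>\<^sup>2
      = (\<Sum>i\<in>{1..t}. (x i - \<mu>)\<^sup>2) / real t) sequentially"
    using eventually_gt_at_top[of 0]
    by eventually_elim (simp add: power2_diff sum.distrib sum_subtractf sum_distrib_left field_simps)
  ultimately show "(\<lambda>t. (\<Sum>i\<in>{1..t}. (x i - \<mu>)\<^sup>2) / real t) \<longlonglongrightarrow> m - \<mu>\<^sup>2"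
    by (simp add: Lim_transform_eventually power2_eq_square)
  show "(\<lambda>i. (x i - a i)\<^sup>2 - (x i - \<mu>)\<^sup>2) \<longlonglongrightarrow> 0"
  proof (rule Lim_null_comparison)
    show "eventually (\<lambda>i. norm ((x i - a i)\<^sup>2 - (x i - \<mu>)\<^sup>2) \<le> \<bar>a i - \<mu>\<bar> * (2 + \<bar>a i\<bar> + \<bar>\<mu>\<bar>)) sequentially"
      using eventually_ge_at_top[of 1]
    proof eventually_elim
      case (elim i)
      have "(x i - a i)\<^sup>2 - (x i - \<mu>)\<^sup>2 = (a i - \<mu>) * (a i + \<mu> - 2 * x i)"
        by (simp add: power2_eq_square algebra_simps)
      moreover have "\<bar>a i + \<mu> - 2 * x i\<bar> \<le> 2 + \<bar>a i\<bar> + \<bar>\<mu>\<bar>"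
        using x[OF elim] by auto
      ultimately show ?case by (simp add: abs_mult mult_left_mono)
    qed
    have "(\<lambda>i. \<bar>a i - \<mu>\<bar> * (2 + \<bar>a i\<bar> + \<bar>\<mu>\<bar>)) \<longlonglongrightarrow> \<bar>\<mu> - \<mu>\<bar> * (2 + \<bar>\<mu>\<bar> + \<bar>\<mu>\<bar>)"
      by (intro tendsto_intros a)
    then show "(\<lambda>i. \<bar>a i - \<mu>\<bar> * (2 + \<bar>a i\<bar> + \<bar>\<mu>\<bar>)) \<longlonglongrightarrow> 0"
      by simp
  qed
qed

section \<open>A strong law of large numbers for bounded i.i.d. sequences\<close>

lemma distr_compose_eq:
  assumes "X \<in> borel_measurable M" "Y \<in> borel_measurable M" "g \<in> borel_measurable borel"
    and "distr M borel X = distr M borel Y"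
  shows "distr M borel (\<lambda>\<omega>. g (X \<omega>)) = distr M borel (\<lambda>\<omega>. g (Y \<omega>))"
proof -
  have "distr M borel (\<lambda>\<omega>. g (X \<omega>)) = distr (distr M borel X) borel g"
    using assms(1,3) by (simp add: distr_distr comp_def)
  also have "\<dots> = distr (distr M borel Y) borel g"
    by (simp only: assms(4))
  also have "\<dots> = distr M borel (\<lambda>\<omega>. g (Y \<omega>))"
    using assms(2,3) by (simp add: distr_distr comp_def)
  finally show ?thesis .
qed

context prob_space
begin

lemma AE_tendsto_if_summable_deviation_prob:
  fixes Z :: "nat \<Rightarrow> 'a \<Rightarrow> real"
  assumes [measurable]: "\<And>n. Z n \<in> borel_measurable M"
    and summable: "\<And>\<epsilon>. \<epsilon> > 0 \<Longrightarrow> summable (\<lambda>n. prob {x\<in>space M. \<epsilon> \<le> \<bar>Z n x - c\<bar>})"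
  shows "AE x in M. (\<lambda>n. Z n x) \<longlonglongrightarrow> c"
proof -
  have "AE x in M. eventually (\<lambda>n. \<bar>Z n x - c\<bar> < inverse (Suc k)) sequentially" for k :: nat
  proof -
    have "AE x in M. eventually (\<lambda>n. x \<in> space M - {x\<in>space M. inverse (Suc k) \<le> \<bar>Z n x - c\<bar>}) sequentially"
      using summable[of "inverse (Suc k)"] by (intro borel_cantelli_AE1) (auto simp: emeasure_eq_measure)
    then show ?thesis
      by eventually_elim (auto elim!: eventually_mono)
  qed
  then have "AE x in M. \<forall>k::nat. eventually (\<lambda>n. \<bar>Z n x - c\<bar> < inverse (Suc k)) sequentially"
    by (simp add: AE_all_countable)
  then show ?thesis
  proof eventually_elim
    case (elim x)
    show ?case
    proof (rule tendstoI)
      fix e :: real assume "e > 0"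
      then obtain k where "inverse (Suc k) < e" using reals_Archimedean by blast
      with elim show "eventually (\<lambda>n. dist (Z n x) c < e) sequentially"
        by (auto simp: dist_real_def elim!: eventually_mono[OF spec[of _ k]])
    qed
  qed
qed

lemma hoeffding_iid_mean_deviation:
  fixes Y :: "nat \<Rightarrow> 'a \<Rightarrow> real"
  assumes indep: "indep_vars (\<lambda>_. borel) Y {1..}"
    and ident: "\<And>i. i \<ge> 1 \<Longrightarrow> distr M borel (Y i) = distr M borel (Y 1)"
    and bounded: "\<And>i x. i \<ge> 1 \<Longrightarrow> x \<in> space M \<Longrightarrow> Y i x \<in> {a..b}" and "a < b"
    and "0 \<le> \<epsilon>" "n \<ge> 1"
  shows "prob {x\<in>space M. \<epsilon> \<le> \<bar>(\<Sum>i\<in>{1..n}. Y i x) / real n - expectation (Y 1)\<bar>}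
    \<le> 2 * exp (- 2 * \<epsilon>\<^sup>2 / (b - a)\<^sup>2) ^ n"
proof -
  interpret Hoeffding_ineq_iid M "{1..n}" Y "Y 1" a b "expectation (Y 1)"
  proof unfold_locales
    show "indep_vars (\<lambda>_. borel) Y {1..n}"
      by (rule indep_vars_subset[OF indep]) auto
    show "distr M borel (Y i) = distr M borel (Y 1)" if "i \<in> {1..n}" for i
      using that by (intro ident) simp
    show "random_variable borel (Y 1)"
      using indep unfolding indep_vars_def by simp
    show "AE x in M. Y 1 x \<in> {a..b}"
      using bounded[of 1] by (intro AE_I2) simp
  qed simp
  have "prob {x\<in>space M. \<epsilon> \<le> \<bar>(\<Sum>i\<in>{1..n}. Y i x) / real (card {1..n}) - expectation (Y 1)\<bar>}
      \<le> 2 * exp (- 2 * real (card {1..n}) * \<epsilon>\<^sup>2 / (b - a)\<^sup>2)"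
    using assms(4-6) by (intro Hoeffding_ineq_abs_ge') auto
  also have "exp (- 2 * real (card {1..n}) * \<epsilon>\<^sup>2 / (b - a)\<^sup>2) = exp (- 2 * \<epsilon>\<^sup>2 / (b - a)\<^sup>2) ^ n"
    unfolding exp_of_nat_mult[symmetric] by (simp add: mult_ac)
  finally show ?thesis by simp
qed

lemma strong_law_bounded_iid:
  fixes Y :: "nat \<Rightarrow> 'a \<Rightarrow> real"
  assumes indep: "indep_vars (\<lambda>_. borel) Y {1..}"
    and ident: "\<And>i. i \<ge> 1 \<Longrightarrow> distr M borel (Y i) = distr M borel (Y 1)"
    and bounded: "\<And>i x. i \<ge> 1 \<Longrightarrow> x \<in> space M \<Longrightarrow> Y i x \<in> {a..b}" and "a < b"
  shows "AE x in M. (\<lambda>t. (\<Sum>i\<in>{1..t}. Y i x) / real t) \<longlonglongrightarrow> expectation (Y 1)"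
proof (rule AE_tendsto_if_summable_deviation_prob)
  show "(\<lambda>x. (\<Sum>i\<in>{1..n}. Y i x) / real n) \<in> borel_measurable M" for n
    using indep unfolding indep_vars_def
    by (intro borel_measurable_divide borel_measurable_sum borel_measurable_const) auto
  fix \<epsilon> :: real assume "\<epsilon> > 0"
  define q where "q = exp (- 2 * \<epsilon>\<^sup>2 / (b - a)\<^sup>2)"
  show "summable (\<lambda>n. prob {x\<in>space M. \<epsilon> \<le> \<bar>(\<Sum>i\<in>{1..n}. Y i x) / real n - expectation (Y 1)\<bar>})"
  proof (rule summable_comparison_test')
    show "summable (\<lambda>n. 2 * q ^ n)"
      using \<open>\<epsilon> > 0\<close> \<open>a < b\<close> by (intro summable_mult summable_geometric) (simp add: q_def)
    show "norm (prob {x\<in>space M. \<epsilon> \<le> \<bar>(\<Sum>i\<in>{1..n}. Y i x) / real n - expectation (Y 1)\<bar>}) \<le> 2 * q ^ n"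
      if "n \<ge> 1" for n
      using hoeffding_iid_mean_deviation[OF assms] \<open>\<epsilon> > 0\<close> that by (simp add: q_def)
  qed
qed

lemma strong_law_first_two_moments:
  fixes X :: "nat \<Rightarrow> 'a \<Rightarrow> real"
  assumes indep: "indep_vars (\<lambda>_. borel) X {1..}"
    and ident: "\<And>i. i \<ge> 1 \<Longrightarrow> distr M borel (X i) = distr M borel (X 1)"
    and range: "\<And>i x. i \<ge> 1 \<Longrightarrow> x \<in> space M \<Longrightarrow> X i x \<in> {0..1}"
  shows "AE x in M. (\<lambda>t. (\<Sum>i\<in>{1..t}. X i x) / real t) \<longlonglongrightarrow> expectation (X 1) \<and>
    (\<lambda>t. (\<Sum>i\<in>{1..t}. (X i x)\<^sup>2) / real t) \<longlonglongrightarrow> expectation (\<lambda>x. (X 1 x)\<^sup>2)"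
proof -
  have meas: "X i \<in> borel_measurable M" if "i \<ge> 1" for i
    using indep that unfolding indep_vars_def by auto
  have "AE x in M. (\<lambda>t. (\<Sum>i\<in>{1..t}. X i x) / real t) \<longlonglongrightarrow> expectation (X 1)"
    using range by (intro strong_law_bounded_iid[OF indep ident, where a = 0 and b = 1]) auto
  moreover have "AE x in M. (\<lambda>t. (\<Sum>i\<in>{1..t}. (X i x)\<^sup>2) / real t) \<longlonglongrightarrow> expectation (\<lambda>x. (X 1 x)\<^sup>2)"
  proof (rule strong_law_bounded_iid[where a = 0 and b = 1])
    show "indep_vars (\<lambda>_. borel) (\<lambda>i x. (X i x)\<^sup>2) {1..}"
      by (rule indep_vars_compose2[OF indep]) auto
    show "distr M borel (\<lambda>x. (X i x)\<^sup>2) = distr M borel (\<lambda>x. (X 1 x)\<^sup>2)" if "i \<ge> 1" for i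
      by (rule distr_compose_eq[OF meas[OF that] meas[of 1] _ ident[OF that]]) measurable
    show "(X i x)\<^sup>2 \<in> {0..1}" if "i \<ge> 1" "x \<in> space M" for i x
      using range[OF that] by (simp add: power_le_one)
  qed simp
  ultimately show ?thesis by eventually_elim simp
qed

end

section \<open>Asymptotics of the WSR width along a fixed path\<close>

lemma psiE_asymp_equiv: "psiE \<sim>[at_right 0] (\<lambda>x. x\<^sup>2 / 2)"
  unfolding psiE_def by real_asymp

lemma mu_hat_tendsto:
  assumes "(\<lambda>t. (\<Sum>i\<in>{1..t}. X i \<omega>) / real t) \<longlonglongrightarrow> \<mu>"
  shows "(\<lambda>t. mu_hat X t \<omega>) \<longlonglongrightarrow> \<mu>"
  unfolding mu_hat_def by (rule regularized_mean_tendsto[OF assms])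

lemma sigma2_hat_tendsto:
  assumes "\<And>i. i \<ge> 1 \<Longrightarrow> X i \<omega> \<in> {0..1}"
    and "(\<lambda>t. (\<Sum>i\<in>{1..t}. X i \<omega>) / real t) \<longlonglongrightarrow> \<mu>"
    and "(\<lambda>t. (\<Sum>i\<in>{1..t}. (X i \<omega>)\<^sup>2) / real t) \<longlonglongrightarrow> m"
  shows "(\<lambda>t. sigma2_hat X t \<omega>) \<longlonglongrightarrow> m - \<mu>\<^sup>2"
  unfolding sigma2_hat_def
  by (intro regularized_mean_tendsto cesaro_squared_deviation_tendsto[where x = "\<lambda>i. X i \<omega>"]
      assms mu_hat_tendsto)

lemma cesaro_prediction_error_tendsto:
  assumes "\<And>i. i \<ge> 1 \<Longrightarrow> X i \<omega> \<in> {0..1}"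
    and "(\<lambda>t. (\<Sum>i\<in>{1..t}. X i \<omega>) / real t) \<longlonglongrightarrow> \<mu>"
    and "(\<lambda>t. (\<Sum>i\<in>{1..t}. (X i \<omega>)\<^sup>2) / real t) \<longlonglongrightarrow> m"
  shows "(\<lambda>t. (\<Sum>i\<in>{1..t}. (X i \<omega> - mu_hat X (i - 1) \<omega>)\<^sup>2) / real t) \<longlonglongrightarrow> m - \<mu>\<^sup>2"
  by (intro cesaro_squared_deviation_tendsto[where x = "\<lambda>i. X i \<omega>"] assms
      filterlim_compose[OF mu_hat_tendsto filterlim_minus_const_nat_at_top])

lemma lambda_wsr_eventually_eq:
  assumes "(\<lambda>t. sigma2_hat X t \<omega>) \<longlonglongrightarrow> s" "s > 0"
  shows "eventually (\<lambda>i. lambda_wsr \<alpha> X i \<omega> =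
    sqrt (2 * ln (2 / \<alpha>) / sigma2_hat X (i - 1) \<omega>) / sqrt (real i * ln (1 + real i))) sequentially"
proof -
  have "(\<lambda>i. sqrt (2 * ln (2 / \<alpha>) / sigma2_hat X (i - 1) \<omega>) * (1 / sqrt (real i * ln (1 + real i))))
      \<longlonglongrightarrow> sqrt (2 * ln (2 / \<alpha>) / s) * 0"
  proof (intro tendsto_mult tendsto_real_sqrt tendsto_divide tendsto_const)
    show "(\<lambda>i. sigma2_hat X (i - 1) \<omega>) \<longlonglongrightarrow> s"
      by (rule filterlim_compose[OF assms(1) filterlim_minus_const_nat_at_top])
    show "(\<lambda>i. 1 / sqrt (real i * ln (1 + real i))) \<longlonglongrightarrow> 0"
      by real_asymp
  qed (use assms(2) in simp)
  then have "eventually (\<lambda>i. sqrt (2 * ln (2 / \<alpha>) / sigma2_hat X (i - 1) \<omega>) / sqrt (real i * ln (1 + real i)) < 1 / 2)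
      sequentially"
    by (auto dest: order_tendstoD(2)[where a = "1 / 2"])
  then show ?thesis
    by eventually_elim (simp add: lambda_wsr_def divide_divide_eq_left mult.assoc real_sqrt_divide real_sqrt_mult)
qed

lemma lambda_wsr_asymp_equiv:
  assumes sigma2: "(\<lambda>t. sigma2_hat X t \<omega>) \<longlonglongrightarrow> s" "s > 0" and \<alpha>: "0 < \<alpha>" "\<alpha> < 2"
  shows "(\<lambda>i. lambda_wsr \<alpha> X i \<omega>) \<sim>[sequentially]
    (\<lambda>i. sqrt (2 * ln (2 / \<alpha>) / s) * (1 / sqrt (real i * ln (1 + real i))))"
proof -
  have "(\<lambda>i. lambda_wsr \<alpha> X i \<omega>) \<sim>[sequentially]
      (\<lambda>i. sqrt (2 * ln (2 / \<alpha>) / sigma2_hat X (i - 1) \<omega>) * (1 / sqrt (real i * ln (1 + real i))))"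
    using lambda_wsr_eventually_eq[OF sigma2] by (intro asymp_equiv_refl_ev) (auto elim!: eventually_mono)
  also have "\<dots> \<sim>[sequentially] (\<lambda>i. sqrt (2 * ln (2 / \<alpha>) / s) * (1 / sqrt (real i * ln (1 + real i))))"
    using \<alpha> sigma2(2)
    by (intro asymp_equiv_intros tendsto_imp_asymp_equiv_const tendsto_intros
        filterlim_compose[OF sigma2(1) filterlim_minus_const_nat_at_top]) auto
  finally show ?thesis .
qed

lemma psiE_lambda_wsr_asymp_equiv:
  assumes sigma2: "(\<lambda>t. sigma2_hat X t \<omega>) \<longlonglongrightarrow> s" "s > 0" and \<alpha>: "0 < \<alpha>" "\<alpha> < 2"
  shows "(\<lambda>i. psiE (lambda_wsr \<alpha> X i \<omega>)) \<sim>[sequentially]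
    (\<lambda>i. ln (2 / \<alpha>) / s * (1 / (real i * ln (1 + real i))))"
proof -
  define K where "K = sqrt (2 * ln (2 / \<alpha>) / s)"
  define v where "v i = 1 / sqrt (real i * ln (1 + real i))" for i :: nat
  define lam where "lam i = lambda_wsr \<alpha> X i \<omega>" for i
  have K: "K > 0" using \<alpha> sigma2(2) by (simp add: K_def)
  have lam: "lam \<sim>[sequentially] (\<lambda>i. K * v i)"
    unfolding lam_def K_def v_def by (rule lambda_wsr_asymp_equiv[OF sigma2 \<alpha>])
  have "(\<lambda>i. K * v i) \<longlonglongrightarrow> K * 0"
    unfolding v_def by (intro tendsto_intros) real_asymp
  then have "lam \<longlonglongrightarrow> 0"
    using asymp_equiv_tendsto_transfer[OF asymp_equiv_symI[OF lam]] by simp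
  moreover have "eventually (\<lambda>i. 0 < lam i) sequentially"
    using asymp_equiv_eventually_pos_iff[OF lam] eventually_gt_at_top[of 0]
    by eventually_elim (use K in \<open>simp add: v_def\<close>)
  ultimately have lam_0: "filterlim lam (at_right 0) sequentially"
    by (simp add: tendsto_imp_filterlim_at_right)
  have "(\<lambda>i. psiE (lam i)) \<sim>[sequentially] (\<lambda>i. (lam i)\<^sup>2 / 2)"
    by (rule asymp_equiv_compose'[OF psiE_asymp_equiv lam_0])
  also have "\<dots> \<sim>[sequentially] (\<lambda>i. (K * v i)\<^sup>2 / 2)"
    by (intro asymp_equiv_intros lam)
  also have "(\<lambda>i. (K * v i)\<^sup>2 / 2) = (\<lambda>i. ln (2 / \<alpha>) / s * (1 / (real i * ln (1 + real i))))"
    using \<alpha> sigma2(2) by (simp add: K_def v_def power_mult_distrib power_divide)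
  finally show ?thesis unfolding lam_def .
qed

lemma sum_lambda_wsr_asymp_equiv:
  assumes sigma2: "(\<lambda>t. sigma2_hat X t \<omega>) \<longlonglongrightarrow> s" "s > 0" and \<alpha>: "0 < \<alpha>" "\<alpha> < 2"
  shows "(\<lambda>t. \<Sum>i\<in>{1..t}. lambda_wsr \<alpha> X i \<omega>) \<sim>[sequentially]
    (\<lambda>t. sqrt (2 * ln (2 / \<alpha>) / s) * (2 * sqrt (real t / ln (real t))))"
proof -
  define K where "K = sqrt (2 * ln (2 / \<alpha>) / s)"
  define v where "v i = 1 / sqrt (real i * ln (1 + real i))" for i :: nat
  have K: "K > 0" using \<alpha> sigma2(2) by (simp add: K_def)
  have v_sum: "(\<lambda>t. \<Sum>i\<in>{1..t}. v i) \<sim>[sequentially] (\<lambda>t. 2 * sqrt (real t / ln (real t)))"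
    unfolding v_def by (rule sum_inverse_sqrt_mult_ln_asymp_equiv)
  have "filterlim (\<lambda>t. \<Sum>i\<in>{1..t}. v i) at_top sequentially"
    by (rule asymp_equiv_at_top_transfer[OF asymp_equiv_symI[OF v_sum]]) real_asymp
  then have "filterlim (\<lambda>t. \<Sum>i\<in>{1..t}. K * v i) at_top sequentially"
    unfolding sum_distrib_left[symmetric] by (rule filterlim_tendsto_pos_mult_at_top[OF tendsto_const K])
  then have "(\<lambda>t. \<Sum>i\<in>{1..t}. lambda_wsr \<alpha> X i \<omega>) \<sim>[sequentially] (\<lambda>t. \<Sum>i\<in>{1..t}. K * v i)"
    using lambda_wsr_asymp_equiv[OF sigma2 \<alpha>] K
    by (intro sum_asymp_equiv) (auto simp: K_def v_def)
  also have "\<dots> \<sim>[sequentially] (\<lambda>t. K * (2 * sqrt (real t / ln (real t))))"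
    unfolding sum_distrib_left[symmetric] by (intro asymp_equiv_intros v_sum)
  finally show ?thesis unfolding K_def .
qed

lemma sum_weighted_prediction_error_asymp_equiv:
  assumes err: "(\<lambda>t. (\<Sum>i\<in>{1..t}. (X i \<omega> - mu_hat X (i - 1) \<omega>)\<^sup>2) / real t) \<longlonglongrightarrow> s" "s > 0"
  shows "(\<lambda>t. \<Sum>i\<in>{1..t}. (X i \<omega> - mu_hat X (i - 1) \<omega>)\<^sup>2 * (1 / (real i * ln (1 + real i))))
    \<sim>[sequentially] (\<lambda>t. s * ln (ln (real t)))"
proof -
  define w where "w i = 1 / (real i * ln (1 + real i))" for i :: nat
  have w_sum: "(\<lambda>t. \<Sum>i\<in>{1..t}. w i) \<sim>[sequentially] (\<lambda>t. ln (ln (real t)))"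
    unfolding w_def by (rule sum_inverse_mult_ln_asymp_equiv)
  have w_nonneg: "0 \<le> w i" for i
    by (simp add: w_def)
  have w_decr: "w (Suc i) \<le> w i" if "i \<ge> 1" for i
    unfolding w_def using that by (intro divide_left_mono mult_mono mult_pos_pos) auto
  have "filterlim (\<lambda>t. \<Sum>i\<in>{1..t}. w i) at_top sequentially"
    by (rule asymp_equiv_at_top_transfer[OF asymp_equiv_symI[OF w_sum]]) real_asymp
  then have "(\<lambda>t. \<Sum>i\<in>{1..t}. (X i \<omega> - mu_hat X (i - 1) \<omega>)\<^sup>2 * w i) \<sim>[sequentially]
      (\<lambda>t. s * (\<Sum>i\<in>{1..t}. w i))"
    using err by (intro asymp_equivI'_const weighted_cesaro_mean_tendsto w_nonneg w_decr) auto
  also have "\<dots> \<sim>[sequentially] (\<lambda>t. s * ln (ln (real t)))"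
    by (intro asymp_equiv_intros w_sum)
  finally show ?thesis unfolding w_def .
qed

lemma wsr_numerator_asymp_equiv:
  assumes sigma2: "(\<lambda>t. sigma2_hat X t \<omega>) \<longlonglongrightarrow> s" "s > 0" and \<alpha>: "0 < \<alpha>" "\<alpha> < 2"
    and err: "(\<lambda>t. (\<Sum>i\<in>{1..t}. (X i \<omega> - mu_hat X (i - 1) \<omega>)\<^sup>2) / real t) \<longlonglongrightarrow> s"
  shows "(\<lambda>t. ln (2 / \<alpha>) + (\<Sum>i\<in>{1..t}. (X i \<omega> - mu_hat X (i - 1) \<omega>)\<^sup>2 * psiE (lambda_wsr \<alpha> X i \<omega>)))
    \<sim>[sequentially] (\<lambda>t. ln (2 / \<alpha>) * ln (ln (real t)))"
proof -
  define L where "L = ln (2 / \<alpha>)"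
  define y where "y i = (X i \<omega> - mu_hat X (i - 1) \<omega>)\<^sup>2" for i
  define w where "w i = 1 / (real i * ln (1 + real i))" for i :: nat
  have L: "L > 0" using \<alpha> by (simp add: L_def)
  have lnln: "filterlim (\<lambda>t. ln (ln (real t))) at_top sequentially"
    by real_asymp
  have yw: "(\<lambda>t. \<Sum>i\<in>{1..t}. y i * w i) \<sim>[sequentially] (\<lambda>t. s * ln (ln (real t)))"
    unfolding y_def w_def by (rule sum_weighted_prediction_error_asymp_equiv[OF err sigma2(2)])
  have "filterlim (\<lambda>t. \<Sum>i\<in>{1..t}. L / s * (y i * w i)) at_top sequentially"
    unfolding sum_distrib_left[symmetric] using L sigma2(2)
    by (intro filterlim_tendsto_pos_mult_at_top[OF tendsto_const] asymp_equiv_at_top_transfer[OF asymp_equiv_symI[OF yw]]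
        filterlim_tendsto_pos_mult_at_top[OF tendsto_const _ lnln]) auto
  then have "(\<lambda>t. \<Sum>i\<in>{1..t}. y i * psiE (lambda_wsr \<alpha> X i \<omega>)) \<sim>[sequentially]
      (\<lambda>t. \<Sum>i\<in>{1..t}. L / s * (y i * w i))"
    using asymp_equiv_mult[OF asymp_equiv_refl[of y] psiE_lambda_wsr_asymp_equiv[OF sigma2 \<alpha>]] L sigma2(2)
    by (intro sum_asymp_equiv) (auto simp: L_def w_def y_def mult_ac)
  also have "\<dots> \<sim>[sequentially] (\<lambda>t. L / s * (s * ln (ln (real t))))"
    unfolding sum_distrib_left[symmetric] by (intro asymp_equiv_intros yw)
  also have "(\<lambda>t. L / s * (s * ln (ln (real t)))) = (\<lambda>t. L * ln (ln (real t)))"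
    using sigma2(2) by simp
  finally have sum: "(\<lambda>t. \<Sum>i\<in>{1..t}. y i * psiE (lambda_wsr \<alpha> X i \<omega>)) \<sim>[sequentially] (\<lambda>t. L * ln (ln (real t)))" .
  have "filterlim (\<lambda>t. \<Sum>i\<in>{1..t}. y i * psiE (lambda_wsr \<alpha> X i \<omega>)) at_top sequentially"
    by (rule asymp_equiv_at_top_transfer[OF asymp_equiv_symI[OF sum]
          filterlim_tendsto_pos_mult_at_top[OF tendsto_const L lnln]])
  from asymp_equiv_trans[OF asymp_equiv_add_const[OF this] sum] show ?thesis
    unfolding L_def y_def .
qed

lemma W_wsr_asymp_equiv_of_moments:
  assumes range: "\<And>i. i \<ge> 1 \<Longrightarrow> X i \<omega> \<in> {0..1}"
    and mean: "(\<lambda>t. (\<Sum>i\<in>{1..t}. X i \<omega>) / real t) \<longlonglongrightarrow> \<mu>"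
    and square: "(\<lambda>t. (\<Sum>i\<in>{1..t}. (X i \<omega>)\<^sup>2) / real t) \<longlonglongrightarrow> m"
    and var: "m - \<mu>\<^sup>2 = \<sigma>\<^sup>2" "\<sigma> > 0" and \<alpha>: "0 < \<alpha>" "\<alpha> < 2"
  shows "(\<lambda>t. W_wsr \<alpha> X t \<omega>) \<sim>[at_top]
    (\<lambda>t. \<sigma> / 2 * sqrt (ln (2 / \<alpha>) * ln (real t) / (2 * real t)) * (1 + ln (ln (real t))))"
proof -
  define L where "L = ln (2 / \<alpha>)"
  have L: "L > 0" using \<alpha> by (simp add: L_def)
  have sigma2: "(\<lambda>t. sigma2_hat X t \<omega>) \<longlonglongrightarrow> \<sigma>\<^sup>2"
    using sigma2_hat_tendsto[of X \<omega>, OF range mean square] var by simp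
  have err: "(\<lambda>t. (\<Sum>i\<in>{1..t}. (X i \<omega> - mu_hat X (i - 1) \<omega>)\<^sup>2) / real t) \<longlonglongrightarrow> \<sigma>\<^sup>2"
    using cesaro_prediction_error_tendsto[of X \<omega>, OF range mean square] var by simp
  have LK: "L / sqrt (2 * L / \<sigma>\<^sup>2) = \<sigma> * sqrt (L / 2)"
    using L var(2) by (simp add: real_sqrt_divide real_sqrt_mult field_simps)
  have "(\<lambda>t. W_wsr \<alpha> X t \<omega>) \<sim>[at_top]
      (\<lambda>t. L * ln (ln (real t)) / (sqrt (2 * L / \<sigma>\<^sup>2) * (2 * sqrt (real t / ln (real t)))))"
    unfolding W_wsr_def L_def using var(2)
    by (intro asymp_equiv_divide wsr_numerator_asymp_equiv[OF sigma2 _ \<alpha> err]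
        sum_lambda_wsr_asymp_equiv[OF sigma2 _ \<alpha>]) auto
  also have "(\<lambda>t. L * ln (ln (real t)) / (sqrt (2 * L / \<sigma>\<^sup>2) * (2 * sqrt (real t / ln (real t))))) =
      (\<lambda>t. \<sigma> * sqrt (L / 2) * (ln (ln (real t)) / (2 * sqrt (real t / ln (real t)))))"
    unfolding LK[symmetric] by (simp add: times_divide_times_eq)
  also have "\<dots> \<sim>[at_top] (\<lambda>t. \<sigma> * sqrt (L / 2) * (1 / 2 * sqrt (ln (real t) / real t) * (1 + ln (ln (real t)))))"
    by (intro asymp_equiv_intros) real_asymp
  also have "\<dots> = (\<lambda>t. \<sigma> / 2 * sqrt (L * ln (real t) / (2 * real t)) * (1 + ln (ln (real t))))"
    by (simp add: real_sqrt_mult[symmetric] mult_ac)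
  finally show ?thesis unfolding L_def .
qed

theorem mainTheorem11:
  fixes M :: "'a measure" and X :: "nat \<Rightarrow> 'a \<Rightarrow> real" and \<alpha> \<sigma> :: real
  assumes "prob_space M"
    and meas: "\<And>i. i \<ge> 1 \<Longrightarrow> X i \<in> borel_measurable M"
    and indep: "prob_space.indep_vars M (\<lambda>_. borel) X {1..}"
    and ident: "\<And>i. i \<ge> 1 \<Longrightarrow> distr M borel (X i) = distr M borel (X 1)"
    and range: "\<And>i \<omega>. i \<ge> 1 \<Longrightarrow> \<omega> \<in> space M \<Longrightarrow> X i \<omega> \<in> {0..1}"
    and var: "prob_space.variance M (X 1) = \<sigma>^2" and "\<sigma> > 0"
    and "0 < \<alpha>" "\<alpha> < 1"
  shows "AE \<omega> in M. (\<lambda>t. W_wsr \<alpha> X t \<omega>) \<sim>[at_top]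
           (\<lambda>t. \<sigma> / 2 * sqrt (ln (2 / \<alpha>) * ln (real t) / (2 * real t)) * (1 + ln (ln (real t))))"
proof -
  interpret prob_space M by fact
  have "integrable M (X 1)" "integrable M (\<lambda>\<omega>. (X 1 \<omega>)\<^sup>2)"
    using range[of 1] meas[of 1] by (auto intro!: integrable_const_bound[where B = 1] simp: power_le_one)
  then have moments: "expectation (\<lambda>\<omega>. (X 1 \<omega>)\<^sup>2) - (expectation (X 1))\<^sup>2 = \<sigma>\<^sup>2"
    using var by (simp add: variance_eq)
  have "AE \<omega> in M. (\<lambda>t. (\<Sum>i\<in>{1..t}. X i \<omega>) / real t) \<longlonglongrightarrow> expectation (X 1) \<and>
      (\<lambda>t. (\<Sum>i\<in>{1..t}. (X i \<omega>)\<^sup>2) / real t) \<longlonglongrightarrow> expectation (\<lambda>\<omega>. (X 1 \<omega>)\<^sup>2)"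
    using indep ident range by (rule strong_law_first_two_moments)
  then show ?thesis
    using AE_space
  proof eventually_elim
    case (elim \<omega>)
    then show ?case
      using range moments \<open>\<sigma> > 0\<close> \<open>0 < \<alpha>\<close> \<open>\<alpha> < 1\<close>
      by (intro W_wsr_asymp_equiv_of_moments[where X = X and \<omega> = \<omega>]) auto
  qed
qed

end
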